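(* Let $n\ge2$ and let $a_1<a_2$ be positive integers. Let $\phi:\mathbb{R}^n_{\ge0}\to\mathbb{R}^2_{\ge0}$, $\phi(x)=(\sum_{i=1}^n x_i^{a_1},\sum_{i=1}^n x_i^{a_2})$. Then $$\mathrm{im}(\phi)=\bigl\{c\in\mathbb{R}^2_{\ge0}:\ c_2^{a_1}\le c_1^{a_2}\le n^{a_2-a_1}c_2^{a_1}\bigr\}.$$ *)

theory Defs
  imports "HOL-Analysis.Analysis"
begin

text \<open>Points of R^n_{>=0} are represented as functions x :: nat => real with
  x i >= 0 for i < n (coordinates x 0, ..., x (n-1)); values at i >= n are irrelevant.\<close>

definition nonneg_orthant :: "nat \<Rightarrow> (nat \<Rightarrow> real) set" where
  "nonneg_orthant n = {x. \<forall>i<n. 0 \<le> x i}"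

definition power_sum_map :: "nat \<Rightarrow> nat \<Rightarrow> nat \<Rightarrow> (nat \<Rightarrow> real) \<Rightarrow> real \<times> real" where
  "power_sum_map n a1 a2 x = ((\<Sum>i<n. x i ^ a1), (\<Sum>i<n. x i ^ a2))"

end

theory Submission
  imports Defs
begin

text \<open>
  Write \<open>s\<^sub>k = \<Sum>\<^sub>i x\<^sub>i\<^sup>k\<close> and \<open>p < q\<close>. The lower bound \<open>s\<^sub>q\<^sup>p \<le> s\<^sub>p\<^sup>q\<close> follows from
  \<open>s\<^sub>q \<le> s\<^sub>p (max x)\<^sup>q\<^sup>-\<^sup>p\<close> and \<open>(max x)\<^sup>p \<le> s\<^sub>p\<close>; the upper bound is the power mean
  inequality, i.e. Jensen for the convex map \<open>y \<mapsto> y\<^sup>q\<^sup>/\<^sup>p\<close>.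
  Conversely, scaling \<open>x\<close> by \<open>l\<close> multiplies \<open>s\<^sub>p, s\<^sub>q\<close> by \<open>l\<^sup>p, l\<^sup>q\<close> and leaves \<open>s\<^sub>p\<^sup>q / s\<^sub>q\<^sup>p\<close>
  unchanged. Along \<open>x = (1, t, \<dots>, t)\<close> with \<open>t \<in> [0, 1]\<close> this ratio moves continuously
  from \<open>1\<close> to \<open>n\<^sup>q\<^sup>-\<^sup>p\<close>, so every admissible ratio is attained (intermediate value
  theorem) and a suitable scaling hits the prescribed point.
\<close>

lemma powr_ratio_power:
  fixes a :: real
  assumes "0 < a" "0 < p"
  shows "(a powr (real q / real p)) ^ p = a ^ q"
proof -
  have "(a powr (real q / real p)) ^ p = a powr (real q / real p * real p)"
    using assms by (simp add: powr_realpow [symmetric] powr_powr)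
  then show ?thesis using assms by (simp add: powr_realpow)
qed

lemma power_powr_ratio:
  fixes a :: real
  assumes "0 < a" "0 < p"
  shows "(a ^ p) powr (real q / real p) = a ^ q"
  using assms by (simp add: powr_realpow [symmetric] powr_powr)

lemma sum_power_le_Max_power:
  fixes x :: "'a \<Rightarrow> real"
  assumes "finite I" "I \<noteq> {}" "\<And>i. i \<in> I \<Longrightarrow> 0 \<le> x i" "p \<le> q"
  shows "(\<Sum>i\<in>I. x i ^ q) \<le> (\<Sum>i\<in>I. x i ^ p) * Max (x ` I) ^ (q - p)"
proof -
  have "(\<Sum>i\<in>I. x i ^ q) \<le> (\<Sum>i\<in>I. x i ^ p * Max (x ` I) ^ (q - p))"
  proof (rule sum_mono)
    fix i assume i: "i \<in> I"
    have "x i ^ q = x i ^ p * x i ^ (q - p)"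
      using \<open>p \<le> q\<close> by (simp flip: power_add)
    also have "\<dots> \<le> x i ^ p * Max (x ` I) ^ (q - p)"
      using assms i by (intro mult_left_mono power_mono) auto
    finally show "x i ^ q \<le> x i ^ p * Max (x ` I) ^ (q - p)" .
  qed
  then show ?thesis by (simp add: sum_distrib_right)
qed

lemma power_sum_power_le:
  fixes x :: "'a \<Rightarrow> real"
  assumes fin: "finite I" and nonneg: "\<And>i. i \<in> I \<Longrightarrow> 0 \<le> x i" and "0 < p" "p \<le> q"
  shows "(\<Sum>i\<in>I. x i ^ q) ^ p \<le> (\<Sum>i\<in>I. x i ^ p) ^ q"
proof (cases "I = {}")
  case True
  then show ?thesis using \<open>0 < p\<close> \<open>p \<le> q\<close> by (simp add: power_0_left)
next
  case False
  define M where "M = Max (x ` I)"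
  have "M \<in> x ` I" unfolding M_def using fin False by simp
  then have M: "0 \<le> M" "M ^ p \<le> (\<Sum>i\<in>I. x i ^ p)"
    using fin nonneg by (auto intro!: member_le_sum)
  have "(\<Sum>i\<in>I. x i ^ q) ^ p \<le> ((\<Sum>i\<in>I. x i ^ p) * M ^ (q - p)) ^ p"
    using sum_power_le_Max_power[OF fin False nonneg \<open>p \<le> q\<close>] nonneg
    unfolding M_def by (intro power_mono) (auto intro: sum_nonneg)
  also have "\<dots> = (\<Sum>i\<in>I. x i ^ p) ^ p * (M ^ p) ^ (q - p)"
    by (simp add: power_mult_distrib mult.commute flip: power_mult)
  also have "\<dots> \<le> (\<Sum>i\<in>I. x i ^ p) ^ p * (\<Sum>i\<in>I. x i ^ p) ^ (q - p)"
    using M nonneg by (intro mult_left_mono power_mono zero_le_power) (auto intro: sum_nonneg)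
  also have "\<dots> = (\<Sum>i\<in>I. x i ^ p) ^ q"
    using \<open>p \<le> q\<close> by (simp flip: power_add)
  finally show ?thesis .
qed

lemma power_mean_le_pos:
  fixes x :: "'a \<Rightarrow> real"
  assumes fin: "finite S" "S \<noteq> {}" and pos: "\<And>i. i \<in> S \<Longrightarrow> 0 < x i" and "0 < p" "p \<le> q"
  shows "(\<Sum>i\<in>S. x i ^ p) ^ q \<le> real (card S) ^ (q - p) * (\<Sum>i\<in>S. x i ^ q) ^ p"
proof -
  define k where "k = real (card S)"
  define r where "r = real q / real p"
  define A where "A = (\<Sum>i\<in>S. x i ^ p) / k"
  define B where "B = (\<Sum>i\<in>S. x i ^ q) / k"
  have k: "0 < k" using fin unfolding k_def by (simp add: card_gt_0_iff)
  have A: "0 < A" unfolding A_def using fin pos k by (simp add: sum_pos)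
  have "A powr r \<le> (\<Sum>i\<in>S. (1 / k) * (x i ^ p) powr r)"
  proof -
    have "(\<lambda>y. y powr r) (\<Sum>i\<in>S. (1 / k) *\<^sub>R x i ^ p) \<le> (\<Sum>i\<in>S. (1 / k) * (x i ^ p) powr r)"
      using \<open>0 < p\<close> \<open>p \<le> q\<close> k pos
      by (intro convex_on_sum[OF fin powr_convex]) (auto simp: r_def k_def)
    then show ?thesis by (simp add: A_def sum_divide_distrib)
  qed
  also have "\<dots> = B"
    unfolding B_def r_def sum_divide_distrib using pos \<open>0 < p\<close> by (simp add: power_powr_ratio)
  finally have "A ^ q \<le> B ^ p"
    using powr_ratio_power[OF A \<open>0 < p\<close>] A unfolding r_def
    by (metis power_mono powr_ge_zero)
  then have "k ^ q * A ^ q \<le> k ^ q * B ^ p"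
    using k by simp
  moreover have "k ^ q * B ^ p = k ^ (q - p) * (\<Sum>i\<in>S. x i ^ q) ^ p"
    using k \<open>p \<le> q\<close> by (simp add: B_def power_divide power_diff)
  ultimately show ?thesis
    using k by (simp add: A_def k_def power_divide)
qed

lemma power_mean_le:
  fixes x :: "'a \<Rightarrow> real"
  assumes fin: "finite I" and nonneg: "\<And>i. i \<in> I \<Longrightarrow> 0 \<le> x i" and "0 < p" "p \<le> q"
  shows "(\<Sum>i\<in>I. x i ^ p) ^ q \<le> real (card I) ^ (q - p) * (\<Sum>i\<in>I. x i ^ q) ^ p"
proof -
  \<comment> \<open>\<open>powr_convex\<close> only covers \<open>(0, \<infinity>)\<close>, so pass to the support of \<open>x\<close>.\<close>
  define S where "S = {i\<in>I. 0 < x i}"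
  have S: "finite S" "S \<subseteq> I" using fin unfolding S_def by auto
  have sum_S: "(\<Sum>i\<in>I. x i ^ m) = (\<Sum>i\<in>S. x i ^ m)" if "0 < m" for m
    using nonneg that by (intro sum.mono_neutral_right[OF fin \<open>S \<subseteq> I\<close>]) (force simp: S_def)
  show ?thesis
  proof (cases "S = {}")
    case True
    then show ?thesis
      using sum_S[of p] nonneg \<open>0 < p\<close> \<open>p \<le> q\<close> by (simp add: power_0_left sum_nonneg)
  next
    case False
    have "(\<Sum>i\<in>S. x i ^ p) ^ q \<le> real (card S) ^ (q - p) * (\<Sum>i\<in>S. x i ^ q) ^ p"
      using \<open>0 < p\<close> \<open>p \<le> q\<close> by (intro power_mean_le_pos[OF S(1) False]) (auto simp: S_def)
    also have "\<dots> \<le> real (card I) ^ (q - p) * (\<Sum>i\<in>S. x i ^ q) ^ p"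
      using card_mono[OF fin \<open>S \<subseteq> I\<close>]
      by (intro mult_right_mono power_mono zero_le_power) (auto simp: S_def intro: sum_nonneg)
    finally show ?thesis
      using sum_S[of p] sum_S[of q] \<open>0 < p\<close> \<open>p \<le> q\<close> by simp
  qed
qed

lemma sum_power_spike:
  fixes l t :: real
  shows "(\<Sum>i<Suc m. (if i = 0 then l else l * t) ^ k) = l ^ k * (1 + real m * t ^ k)"
  by (simp add: sum.lessThan_Suc_shift power_mult_distrib distrib_left del: sum.lessThan_Suc)

lemma exists_scaling:
  fixes A B c1 c2 :: real
  assumes "0 < p" "0 < A" "0 \<le> B" "0 \<le> c1" "0 \<le> c2"
    and balanced: "c1 ^ q * B ^ p = c2 ^ p * A ^ q"
  shows "\<exists>l\<ge>0. l ^ p * A = c1 \<and> l ^ q * B = c2"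
proof (intro exI conjI)
  define l where "l = root p (c1 / A)"
  show "0 \<le> l" "l ^ p * A = c1"
    using assms by (simp_all add: l_def real_root_ge_zero)
  then have "(l ^ q * B) ^ p * A ^ q = c1 ^ q * B ^ p"
    by (auto simp: power_mult_distrib mult.commute[of q p] simp flip: power_mult)
  then have "(l ^ q * B) ^ p = c2 ^ p"
    using balanced \<open>0 < A\<close> by simp
  then show "l ^ q * B = c2"
    using \<open>0 \<le> l\<close> assms by (simp add: power_eq_imp_eq_base)
qed

lemma exists_balanced_spike:
  fixes c1 c2 :: real
  assumes "0 < p" "p \<le> q" "c2 ^ p \<le> c1 ^ q" "c1 ^ q \<le> real (Suc m) ^ (q - p) * c2 ^ p"
  shows "\<exists>t. 0 \<le> t \<and> t \<le> 1 \<and> c1 ^ q * (1 + real m * t ^ q) ^ p = c2 ^ p * (1 + real m * t ^ p) ^ q"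
proof -
  define h where "h t = c1 ^ q * (1 + real m * t ^ q) ^ p - c2 ^ p * (1 + real m * t ^ p) ^ q"
    for t :: real
  have "0 \<le> h 0"
    using assms by (simp add: h_def power_0_left)
  have "c1 ^ q * real (Suc m) ^ p \<le> real (Suc m) ^ (q - p) * c2 ^ p * real (Suc m) ^ p"
    using assms(4) by (rule mult_right_mono) simp
  also have "\<dots> = c2 ^ p * real (Suc m) ^ q"
    using \<open>p \<le> q\<close> by (simp add: mult.commute mult.left_commute flip: power_add)
  finally have "h 1 \<le> 0"
    by (simp add: h_def add.commute)
  moreover have "\<forall>t. 0 \<le> t \<and> t \<le> 1 \<longrightarrow> isCont h t"
    unfolding h_def by (intro allI impI continuous_intros)
  ultimately show ?thesis
    using IVT2[of h 1 0 0] \<open>0 \<le> h 0\<close> unfolding h_def by auto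
qed

lemma power_sum_map_bounds:
  assumes "x \<in> nonneg_orthant n" "0 < p" "p \<le> q" and "power_sum_map n p q x = (c1, c2)"
  shows "0 \<le> c1 \<and> 0 \<le> c2 \<and> c2 ^ p \<le> c1 ^ q \<and> c1 ^ q \<le> real n ^ (q - p) * c2 ^ p"
proof -
  have nonneg: "\<And>i. i \<in> {..<n} \<Longrightarrow> 0 \<le> x i"
    using assms(1) by (simp add: nonneg_orthant_def)
  show ?thesis
    using power_sum_power_le[where I = "{..<n}" and p = p and q = q, OF _ nonneg]
      power_mean_le[where I = "{..<n}" and p = p and q = q, OF _ nonneg] nonneg assms(2-4)
    by (auto simp: power_sum_map_def intro: sum_nonneg)
qed

lemma in_image_power_sum_map:
  fixes c1 c2 :: real
  assumes "0 < n" "0 < p" "p \<le> q" "0 \<le> c1" "0 \<le> c2"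
    and bounds: "c2 ^ p \<le> c1 ^ q" "c1 ^ q \<le> real n ^ (q - p) * c2 ^ p"
  shows "(c1, c2) \<in> power_sum_map n p q ` nonneg_orthant n"
proof -
  obtain m where n: "n = Suc m" using \<open>0 < n\<close> by (cases n) auto
  obtain t where t: "0 \<le> t" "t \<le> 1"
    and balanced: "c1 ^ q * (1 + real m * t ^ q) ^ p = c2 ^ p * (1 + real m * t ^ p) ^ q"
    using exists_balanced_spike[of p q c2 c1 m] assms unfolding n by auto
  have "0 < 1 + real m * t ^ p" "0 \<le> 1 + real m * t ^ q"
    using t by (simp_all add: add_pos_nonneg)
  then obtain l where "0 \<le> l" "l ^ p * (1 + real m * t ^ p) = c1"
    "l ^ q * (1 + real m * t ^ q) = c2"
    using exists_scaling[OF \<open>0 < p\<close> _ _ \<open>0 \<le> c1\<close> \<open>0 \<le> c2\<close> balanced] by blast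
  then have "power_sum_map n p q (\<lambda>i. if i = 0 then l else l * t) = (c1, c2)"
    unfolding power_sum_map_def n sum_power_spike by simp
  moreover have "(\<lambda>i. if i = 0 then l else l * t) \<in> nonneg_orthant n"
    using \<open>0 \<le> l\<close> t by (simp add: nonneg_orthant_def)
  ultimately show ?thesis
    by (metis image_eqI)
qed

theorem proposition5p2:
  fixes n a1 a2 :: nat
  assumes "n \<ge> 2" and "0 < a1" and "a1 < a2"
  shows "power_sum_map n a1 a2 ` nonneg_orthant n =
         {(c1, c2). 0 \<le> c1 \<and> 0 \<le> c2 \<and> c2 ^ a1 \<le> c1 ^ a2 \<and>
                    c1 ^ a2 \<le> real n ^ (a2 - a1) * c2 ^ a1}"
proof (intro equalityI subsetI)
  fix c assume "c \<in> power_sum_map n a1 a2 ` nonneg_orthant n"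
  then obtain x where "x \<in> nonneg_orthant n" "power_sum_map n a1 a2 x = c"
    by blast
  then show "c \<in> {(c1, c2). 0 \<le> c1 \<and> 0 \<le> c2 \<and> c2 ^ a1 \<le> c1 ^ a2 \<and>
                            c1 ^ a2 \<le> real n ^ (a2 - a1) * c2 ^ a1}"
    using power_sum_map_bounds[of x n a1 a2 "fst c" "snd c"] assms by auto
next
  fix c assume "c \<in> {(c1, c2). 0 \<le> c1 \<and> 0 \<le> c2 \<and> c2 ^ a1 \<le> c1 ^ a2 \<and>
                               c1 ^ a2 \<le> real n ^ (a2 - a1) * c2 ^ a1}"
  then show "c \<in> power_sum_map n a1 a2 ` nonneg_orthant n"
    using in_image_power_sum_map[of n a1 a2] assms by auto
qed

end
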